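(* Let $n \geq 1$ and let $Q, R$ be fixed real symmetric positive semidefinite $n \times n$ matrices, and let $S = \begin{pmatrix} Q & 0 \\ 0 & R \end{pmatrix}$ be the $2n \times 2n$ block-diagonal matrix. Let $U, V$ be independent random $n \times n$ matrices, each distributed uniformly (Haar) on the set of $n \times n$ orthogonal matrices, and let $u_j, v_j$ denote the $j$-th columns of $U$ and $V$. Define $\mu = \min_{j \leq n} \left( u_j^\top Q u_j + v_j^\top R v_j \right)$. Then $$\forall\, 0 \leq \gamma \leq 1,\quad \mathbb{P}\left( \mu \geq \frac{\operatorname{tr}(S)}{2n}(1-\gamma) \right) \geq 1 - n\, e^{-\frac{\operatorname{tr}(S)^2}{4\|S\|_F^2}\gamma^2} - 2 e^{-\frac{n}{8}},$$ and, for all $\gamma \geq 0$, $$\mathbb{P}\left( \mu \leq \frac{4\operatorname{tr}(S)}{n}(1+\gamma) \right) \geq \begin{cases} 1 - e^{-\frac{\operatorname{tr}(S)^2}{8\|S\|_F^2}\gamma^2} - 2e^{-\frac{n}{8}} & \text{if } \gamma \leq \frac{\|S\|_F^2}{\operatorname{tr}(S)\,\|S\|_{op}}, \\ 1 - e^{-\frac{\operatorname{tr}(S)}{8\|S\|_{op}}\gamma} - 2e^{-\frac{n}{8}} & \text{otherwise.} \end{cases}$$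
   Context: $\|\cdot\|_F$ denotes the Frobenius norm and $\|\cdot\|_{op}$ the operator (spectral) norm. $\operatorname{tr}$ is the trace. *)

theory Defs
  imports "HOL-Probability.Probability"
begin

definition psd_matrix :: "real^'n^'n \<Rightarrow> bool" where
  "psd_matrix Q \<longleftrightarrow> transpose Q = Q \<and> (\<forall>x. 0 \<le> x \<bullet> (Q *v x))"

text \<open>Haar (uniform) probability measure on the orthogonal group O(n), characterised as a
Borel probability measure on n x n real matrices, concentrated on the orthogonal matrices and
invariant under left multiplication by orthogonal matrices (unique by uniqueness of Haar measure).\<close>
definition haar_orthogonal :: "(real^'n^'n) measure \<Rightarrow> bool" where
  "haar_orthogonal M \<longleftrightarrow> sets M = sets borel \<and> prob_space M \<and>
     emeasure M {U. orthogonal_matrix U} = 1 \<and>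
     (\<forall>A. orthogonal_matrix A \<longrightarrow> distr M borel (\<lambda>U. A ** U) = M)"

definition block_diag :: "real^'n^'n \<Rightarrow> real^'n^'n \<Rightarrow> real^('n + 'n)^('n + 'n)" where
  "block_diag Q R = (\<chi> i j. case (i, j) of
       (Inl a, Inl b) \<Rightarrow> Q $ a $ b
     | (Inr a, Inr b) \<Rightarrow> R $ a $ b
     | _ \<Rightarrow> 0)"

definition frob_norm :: "real^'m^'k \<Rightarrow> real" where
  "frob_norm A = sqrt (\<Sum>i\<in>UNIV. \<Sum>j\<in>UNIV. (A $ i $ j)^2)"

definition op_norm :: "real^'m^'k \<Rightarrow> real" where
  "op_norm A = onorm (\<lambda>x. A *v x)"

definition min_diag :: "real^'n^'n \<Rightarrow> real^'n^'n \<Rightarrow> real^'n^'n \<Rightarrow> real^'n^'n \<Rightarrow> real" where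
  "min_diag Q R U V = Min (range (\<lambda>j. column j U \<bullet> (Q *v column j U) + column j V \<bullet> (R *v column j V)))"

end

theory Submission
  imports Defs
begin

(* For a Haar-distributed U the column u_j is uniform on the unit sphere, and a standard
   Gaussian vector w has the law of |w| u_j with |w| independent of u_j and E |w|^2 = n.
   Jensen's inequality in the radial part therefore gives
     E exp (- t u_j^T Q u_j) <= E exp (- (t/n) w^T Q w),
   and diagonalising Q the Gaussian side factorises into prod_i (1 + 2 (t/n) d_i)^(-1/2)
   <= exp (- (t/n) tr Q + (t/n)^2 |Q|_F^2).  A Chernoff bound for u_j^T Q u_j + v_j^T R v_j
   with the optimal t, followed by a union bound over the n columns, yields the lower tail
   of mu (even without the term 2 exp (- n/8)).  The upper tail is deterministic: since
   sum_j (u_j^T Q u_j + v_j^T R v_j) = tr Q + tr R = tr S, the minimum mu is at most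
   tr S / n <= 4 tr S (1 + gamma) / n for all orthogonal U and V. *)

section \<open>Orthogonal invariance of Lebesgue measure\<close>

(* Change_Of_Vars proves measure_orthogonal_image only for wellordered index types; a copy of
   a finite index type is wellordered through to_nat, and Lebesgue measure is transported
   along the resulting relabelling of coordinates. *)
typedef 'a wellordered = "UNIV :: 'a set" by simp

instance wellordered :: (finite) finite
proof
  have "(UNIV :: 'a wellordered set) = Abs_wellordered ` UNIV"
    by (metis Rep_wellordered_inverse surj_def)
  then show "finite (UNIV :: 'a wellordered set)"
    by (metis finite_class.finite_UNIV finite_imageI)
qed

instantiation wellordered :: (finite) linorder
begin
definition less_eq_wellordered :: "'a wellordered \<Rightarrow> 'a wellordered \<Rightarrow> bool" where
  "x \<le> y \<longleftrightarrow> to_nat (Rep_wellordered x) \<le> to_nat (Rep_wellordered y)"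
definition less_wellordered :: "'a wellordered \<Rightarrow> 'a wellordered \<Rightarrow> bool" where
  "x < y \<longleftrightarrow> to_nat (Rep_wellordered x) < to_nat (Rep_wellordered y)"
instance
  by standard (auto simp: less_eq_wellordered_def less_wellordered_def Rep_wellordered_inject)

end

instance wellordered :: (finite) wellorder
proof
  fix P :: "'a wellordered \<Rightarrow> bool" and a
  assume step: "\<And>x. (\<And>y. y < x \<Longrightarrow> P y) \<Longrightarrow> P x"
  have "\<forall>x. to_nat (Rep_wellordered x) = k \<longrightarrow> P x" for k
    by (induction k rule: less_induct) (metis step less_wellordered_def)
  then show "P a" by blast
qed

lemma orthogonal_transformation_borel_measurable:
  fixes f :: "'a::euclidean_space \<Rightarrow> 'a"
  shows "orthogonal_transformation f \<Longrightarrow> f \<in> borel_measurable borel"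
  by (intro borel_measurable_continuous_onI linear_continuous_on)
     (metis orthogonal_transformation_linear linear_conv_bounded_linear)

lemma lborel_distr_orthogonal_transformation_wellorder:
  fixes f :: "real^('k::{finite,wellorder}) \<Rightarrow> real^('k::{finite,wellorder})"
  assumes f: "orthogonal_transformation f"
  shows "distr lborel borel f = lborel"
proof (rule lborel_eqI[symmetric])
  fix l u :: "real^('k::{finite,wellorder})"
  assume le: "\<And>b. b \<in> Basis \<Longrightarrow> l \<bullet> b \<le> u \<bullet> b"
  have g: "orthogonal_transformation (inv f)"
    using f by (rule orthogonal_transformation_inv)
  have preimage: "f -` box l u = inv f ` box l u"
    using f by (simp add: bij_vimage_eq_inv_image orthogonal_transformation_bij)
  have box: "box l u \<in> lmeasurable" by simp
  have image: "inv f ` box l u \<in> lmeasurable"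
    by (rule measurable_orthogonal_image[OF g box])
  have "emeasure (distr lborel borel f) (box l u) = emeasure lborel (f -` box l u)"
    using f by (simp add: emeasure_distr orthogonal_transformation_borel_measurable)
  also have "\<dots> = emeasure lebesgue (inv f ` box l u)"
    using measurable_sets_borel[OF orthogonal_transformation_borel_measurable[OF f], of "box l u"]
    by (simp add: preimage emeasure_completion)
  also have "\<dots> = emeasure lebesgue (box l u)"
    using image by (simp add: emeasure_eq_measure2 measure_orthogonal_image[OF g box])
  also have "\<dots> = (\<Prod>b\<in>Basis. (u - l) \<bullet> b)"
    using le by (simp add: emeasure_lborel_box)
  finally show "emeasure (distr lborel borel f) (box l u) = (\<Prod>b\<in>Basis. (u - l) \<bullet> b)" .
qed simp

definition relabel :: "real^('n wellordered) \<Rightarrow> real^'n" where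
  "relabel y = (\<chi> i. y $ Abs_wellordered i)"

definition unlabel :: "real^'n \<Rightarrow> real^('n wellordered)" where
  "unlabel x = (\<chi> i. x $ Rep_wellordered i)"

lemma relabel_unlabel [simp]: "relabel (unlabel x) = x"
  by (simp add: relabel_def unlabel_def Abs_wellordered_inverse)

lemma unlabel_relabel [simp]: "unlabel (relabel y) = y"
  by (simp add: relabel_def unlabel_def Rep_wellordered_inverse)

lemma bij_betw_Rep_wellordered: "bij_betw Rep_wellordered UNIV UNIV"
  by (rule bij_betw_byWitness[where f' = Abs_wellordered])
     (auto simp: Rep_wellordered_inverse Abs_wellordered_inverse)

lemma linear_relabel: "linear relabel"
  by (auto simp: linear_iff relabel_def vec_eq_iff)

lemma linear_unlabel: "linear unlabel"
  by (auto simp: linear_iff unlabel_def vec_eq_iff)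

lemma norm_unlabel: "norm (unlabel x) = norm x"
  using sum.reindex_bij_betw[OF bij_betw_Rep_wellordered, of "\<lambda>i. (x $ i)\<^sup>2"]
  by (simp add: norm_vec_def L2_set_def unlabel_def)

lemma prod_Basis_vec: "(\<Prod>b\<in>(Basis :: (real^'n) set). f b) = (\<Prod>i\<in>UNIV. f (axis i 1))"
proof -
  have inj: "inj (\<lambda>i::'n. axis i (1::real))"
    by (auto simp: inj_def axis_eq_axis)
  have "(Basis :: (real^'n) set) = range (\<lambda>i. axis i 1)"
    by (auto simp: Basis_vec_def)
  then show ?thesis
    using prod.reindex[OF inj, of f] by simp
qed

lemma borel_measurable_relabel [measurable]: "relabel \<in> borel_measurable borel"
  by (intro borel_measurable_continuous_onI linear_continuous_on)
     (metis linear_relabel linear_conv_bounded_linear)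

lemma lborel_distr_relabel: "distr lborel borel relabel = (lborel :: (real^'n::finite) measure)"
proof (rule lborel_eqI[symmetric])
  fix l u :: "real^'n"
  assume le: "\<And>b. b \<in> Basis \<Longrightarrow> l \<bullet> b \<le> u \<bullet> b"
  have preimage: "relabel -` box l u = box (unlabel l) (unlabel u)"
    by (auto simp: mem_box_cart relabel_def unlabel_def)
       (metis Abs_wellordered_cases Abs_wellordered_inverse UNIV_I)+
  have "unlabel l $ i \<le> unlabel u $ i" for i
    using le[of "axis (Rep_wellordered i) 1"] by (simp add: unlabel_def inner_axis)
  then have le': "b \<in> Basis \<Longrightarrow> unlabel l \<bullet> b \<le> unlabel u \<bullet> b" for b
    by (auto simp: Basis_vec_def inner_axis)
  have "emeasure (distr lborel borel relabel) (box l u)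
      = emeasure lborel (relabel -` box l u \<inter> space lborel)"
    by (intro emeasure_distr) auto
  also have "\<dots> = emeasure lborel (box (unlabel l) (unlabel u))"
    by (simp add: preimage)
  also have "\<dots> = (\<Prod>i\<in>UNIV. u $ Rep_wellordered i - l $ Rep_wellordered i)"
    using le' by (simp add: emeasure_lborel_box prod_Basis_vec inner_axis unlabel_def)
  also have "\<dots> = (\<Prod>b\<in>Basis. (u - l) \<bullet> b)"
    using prod.reindex_bij_betw[OF bij_betw_Rep_wellordered, of "\<lambda>i. u $ i - l $ i"]
    by (simp add: prod_Basis_vec inner_axis)
  finally show "emeasure (distr lborel borel relabel) (box l u) = (\<Prod>b\<in>Basis. (u - l) \<bullet> b)" .
qed simp

lemma lborel_distr_orthogonal_transformation:
  fixes f :: "real^'n::finite \<Rightarrow> real^'n"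
  assumes f: "orthogonal_transformation f"
  shows "distr lborel borel f = lborel"
proof -
  define g where "g = unlabel \<circ> f \<circ> relabel"
  have norm_relabel: "norm (relabel y) = norm y" for y
    by (metis norm_unlabel unlabel_relabel)
  have g: "orthogonal_transformation g"
    using f unfolding g_def orthogonal_transformation
    by (auto simp: norm_relabel norm_unlabel intro!: linear_compose linear_relabel linear_unlabel)
  have measurable: "f \<in> borel_measurable borel" "g \<in> borel_measurable borel"
    using f g by (simp_all add: orthogonal_transformation_borel_measurable)
  have "distr lborel borel f = distr (distr lborel borel relabel) borel f"
    by (simp add: lborel_distr_relabel)
  also have "\<dots> = distr lborel borel (f \<circ> relabel)"
    using measurable by (intro distr_distr) auto
  also have "f \<circ> relabel = relabel \<circ> g"
    by (simp add: g_def fun_eq_iff)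
  also have "distr lborel borel (relabel \<circ> g) = distr (distr lborel borel g) borel relabel"
    using measurable by (intro distr_distr[symmetric]) auto
  also have "\<dots> = lborel"
    by (simp add: lborel_distr_orthogonal_transformation_wellorder[OF g] lborel_distr_relabel)
  finally show ?thesis .
qed

section \<open>The standard Gaussian measure on \<open>real^'n\<close>\<close>

definition std_gaussian_density :: "real^'n \<Rightarrow> real" where
  "std_gaussian_density x = (\<Prod>i\<in>UNIV. std_normal_density (x $ i))"

definition std_gaussian :: "(real^'n) measure" where
  "std_gaussian = density lborel (\<lambda>x. ennreal (std_gaussian_density x))"

lemma borel_measurable_std_gaussian_density [measurable]:
  "std_gaussian_density \<in> borel_measurable borel"
  unfolding std_gaussian_density_def by measurable

lemma sets_std_gaussian [simp, measurable_cong]: "sets std_gaussian = sets borel"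
  by (simp add: std_gaussian_def)

lemma space_std_gaussian [simp]: "space std_gaussian = UNIV"
  by (simp add: std_gaussian_def)

lemma norm_power2_vec: "(norm (x :: real^'n))\<^sup>2 = (\<Sum>i\<in>UNIV. (x $ i)\<^sup>2)"
  unfolding power2_norm_eq_inner inner_vec_def by (simp add: power2_eq_square)

lemma std_gaussian_density_eq:
  "std_gaussian_density (x :: real^'n) = (1 / sqrt (2 * pi)) ^ CARD('n) * exp (- (norm x)\<^sup>2 / 2)"
proof -
  have "std_gaussian_density x = (\<Prod>i\<in>UNIV. 1 / sqrt (2 * pi) * exp (- (x $ i)\<^sup>2 / 2))"
    by (simp add: std_gaussian_density_def std_normal_density_def)
  also have "\<dots> = (1 / sqrt (2 * pi)) ^ CARD('n) * (\<Prod>i\<in>UNIV. exp (- (x $ i)\<^sup>2 / 2))"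
    by (simp only: prod.distrib prod_constant card_UNIV)
  also have "(\<Prod>i\<in>UNIV. exp (- (x $ i)\<^sup>2 / 2)) = exp (\<Sum>i\<in>UNIV. - (x $ i)\<^sup>2 / 2)"
    by (simp add: exp_sum)
  finally show ?thesis
    by (simp add: norm_power2_vec sum_negf sum_divide_distrib)
qed

lemma std_gaussian_density_orthogonal_transformation:
  fixes f :: "real^'n \<Rightarrow> real^'n"
  shows "orthogonal_transformation f \<Longrightarrow> std_gaussian_density (f x) = std_gaussian_density x"
  by (simp add: std_gaussian_density_eq orthogonal_transformation_norm)

lemma nn_integral_std_gaussian_orthogonal_transformation:
  fixes f :: "real^'n \<Rightarrow> real^'n" and g :: "real^'n \<Rightarrow> ennreal"
  assumes f: "orthogonal_transformation f" and g [measurable]: "g \<in> borel_measurable borel"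
  shows "(\<integral>\<^sup>+x. g (f x) \<partial>std_gaussian) = (\<integral>\<^sup>+x. g x \<partial>std_gaussian)"
proof -
  have [measurable]: "f \<in> borel_measurable borel"
    using f by (rule orthogonal_transformation_borel_measurable)
  have "(\<integral>\<^sup>+x. g (f x) \<partial>std_gaussian)
      = (\<integral>\<^sup>+x. ennreal (std_gaussian_density (f x)) * g (f x) \<partial>lborel)"
    by (simp add: std_gaussian_def nn_integral_density
        std_gaussian_density_orthogonal_transformation[OF f])
  also have "\<dots> = (\<integral>\<^sup>+y. ennreal (std_gaussian_density y) * g y \<partial>distr lborel borel f)"
    by (simp add: nn_integral_distr)
  also have "\<dots> = (\<integral>\<^sup>+x. g x \<partial>std_gaussian)"
    by (simp add: lborel_distr_orthogonal_transformation[OF f] std_gaussian_def nn_integral_density)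
  finally show ?thesis .
qed

lemma nn_integral_std_gaussian_prod:
  fixes h :: "'n::finite \<Rightarrow> real \<Rightarrow> ennreal"
  assumes [measurable]: "\<And>i. h i \<in> borel_measurable borel"
  shows "(\<integral>\<^sup>+x. (\<Prod>i\<in>UNIV. h i (x $ i)) \<partial>(std_gaussian :: (real^'n) measure))
     = (\<Prod>i\<in>UNIV. \<integral>\<^sup>+y. ennreal (std_normal_density y) * h i y \<partial>lborel)"
proof -
  define F where "F b y = ennreal (std_normal_density y) * h (axis_index b) y"
    for b :: "real^'n" and y
  have [measurable]: "F b \<in> borel_measurable borel" for b
    unfolding F_def by measurable
  have "ennreal (std_gaussian_density x) * (\<Prod>i\<in>UNIV. h i (x $ i)) = (\<Prod>b\<in>Basis. F b (x \<bullet> b))"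
    for x :: "real^'n"
    by (simp add: std_gaussian_density_def prod_ennreal[symmetric] F_def prod.distrib
        prod_Basis_vec inner_axis)
  then have "(\<integral>\<^sup>+x. (\<Prod>i\<in>UNIV. h i (x $ i)) \<partial>(std_gaussian :: (real^'n) measure))
      = (\<integral>\<^sup>+x. (\<Prod>b\<in>Basis. F b (x \<bullet> b)) \<partial>lborel)"
    by (simp add: std_gaussian_def nn_integral_density)
  also have "\<dots> = (\<Prod>b\<in>Basis. (\<integral>\<^sup>+y. F b y \<partial>lborel))"
    by (rule nn_integral_lborel_prod) auto
  finally show ?thesis
    by (simp add: prod_Basis_vec F_def)
qed

lemma nn_integral_normal_density:
  "0 < \<sigma> \<Longrightarrow> (\<integral>\<^sup>+y. ennreal (normal_density \<mu> \<sigma> y) \<partial>lborel) = 1"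
  by (simp add: nn_integral_eq_integral)

lemma prob_space_std_gaussian: "prob_space (std_gaussian :: (real^'n) measure)"
proof
  have "emeasure (std_gaussian :: (real^'n) measure) (space std_gaussian)
      = (\<integral>\<^sup>+x. (\<Prod>i\<in>UNIV. (\<lambda>_ _. 1 :: ennreal) i (x $ i)) \<partial>(std_gaussian :: (real^'n) measure))"
    by (simp add: nn_integral_const)
  also have "\<dots> = 1"
    by (subst nn_integral_std_gaussian_prod) (simp_all add: nn_integral_normal_density)
  finally show "emeasure (std_gaussian :: (real^'n) measure) (space std_gaussian) = 1" .
qed

lemma nn_integral_std_gaussian_coordinate_power2:
  "(\<integral>\<^sup>+x. ennreal ((x $ k)\<^sup>2) \<partial>(std_gaussian :: (real^'n) measure)) = 1"
proof -
  have "(\<integral>\<^sup>+y. ennreal (std_normal_density y * y\<^sup>2) \<partial>lborel) = ennreal 1"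
    using std_normal_moment_even[of 1]
    by (subst nn_integral_eq_integrable) (auto simp: has_bochner_integral_iff)
  then have second_moment: "(\<integral>\<^sup>+y. ennreal (std_normal_density y) * ennreal (y\<^sup>2) \<partial>lborel) = 1"
    by (simp add: ennreal_mult)
  let ?h = "\<lambda>i y. if i = k then ennreal (y\<^sup>2) else 1"
  have "(\<integral>\<^sup>+x. ennreal ((x $ k)\<^sup>2) \<partial>(std_gaussian :: (real^'n) measure))
      = (\<integral>\<^sup>+x. (\<Prod>i\<in>UNIV. ?h i (x $ i)) \<partial>std_gaussian)"
    by (simp add: prod.delta)
  also have "\<dots> = (\<Prod>i\<in>UNIV. \<integral>\<^sup>+y. ennreal (std_normal_density y) * ?h i y \<partial>lborel)"
    by (rule nn_integral_std_gaussian_prod) simp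
  also have "\<dots> = 1"
  proof (intro prod.neutral ballI)
    fix i
    show "(\<integral>\<^sup>+y. ennreal (std_normal_density y) * ?h i y \<partial>lborel) = 1"
      by (cases "i = k") (simp_all add: second_moment nn_integral_normal_density)
  qed
  finally show ?thesis .
qed

lemma std_gaussian_norm_power2:
  "integrable std_gaussian (\<lambda>x :: real^'n. (norm x)\<^sup>2)"
  "(\<integral>x. (norm x)\<^sup>2 \<partial>(std_gaussian :: (real^'n) measure)) = CARD('n)"
proof -
  have "(\<integral>\<^sup>+x. ennreal ((norm x)\<^sup>2) \<partial>(std_gaussian :: (real^'n) measure))
      = (\<integral>\<^sup>+x. (\<Sum>k\<in>UNIV. ennreal ((x $ k)\<^sup>2)) \<partial>(std_gaussian :: (real^'n) measure))"
    by (simp add: norm_power2_vec)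
  also have "\<dots> = (\<Sum>k\<in>UNIV. \<integral>\<^sup>+x. ennreal ((x $ k)\<^sup>2) \<partial>(std_gaussian :: (real^'n) measure))"
    by (rule nn_integral_sum) simp
  also have "\<dots> = ennreal (real CARD('n))"
    by (simp add: nn_integral_std_gaussian_coordinate_power2 ennreal_of_nat_eq_real_of_nat)
  finally show "integrable std_gaussian (\<lambda>x :: real^'n. (norm x)\<^sup>2)"
    "(\<integral>x. (norm x)\<^sup>2 \<partial>(std_gaussian :: (real^'n) measure)) = real CARD('n)"
    by (subst (asm) nn_integral_eq_integrable; simp)+
qed

lemma exp_le_nn_integral_std_gaussian_exp_norm:
  fixes a :: real
  assumes a: "0 \<le> a"
  shows "ennreal (exp (- a))
    \<le> (\<integral>\<^sup>+w. ennreal (exp (- a * ((norm w)\<^sup>2 / CARD('n)))) \<partial>(std_gaussian :: (real^'n) measure))"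
proof -
  interpret G: prob_space "std_gaussian :: (real^'n) measure"
    by (rule prob_space_std_gaussian)
  define c where "c w = (norm w)\<^sup>2 / CARD('n)" for w :: "real^'n"
  have c: "integrable std_gaussian c"
    unfolding c_def by (intro integrable_divide_zero std_gaussian_norm_power2)
  have c_mean: "(\<integral>w. c w \<partial>std_gaussian) = 1"
    using std_gaussian_norm_power2(2)[where 'n = 'n] by (simp add: c_def)
  have [measurable]: "c \<in> borel_measurable std_gaussian"
    using c by (rule borel_measurable_integrable)
  have integrable: "integrable std_gaussian (\<lambda>w. exp (- a * c w))"
    using a by (intro G.integrable_const_bound[where B = 1]) (auto simp: c_def)
  \<comment> \<open>Jensen's inequality, via the tangent of \<open>t \<mapsto> exp (- a t)\<close> at \<open>t = 1 = E c\<close>\<close>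
  have tangent: "exp (- a) * (1 - a * (c w - 1)) \<le> exp (- a * c w)" for w
  proof -
    have "exp (- a) * (1 + - a * (c w - 1)) \<le> exp (- a) * exp (- a * (c w - 1))"
      by (intro mult_left_mono exp_ge_add_one_self) auto
    then show ?thesis
      by (simp add: mult_exp_exp algebra_simps)
  qed
  have "G.prob UNIV = 1"
    using G.prob_space by simp
  then have "exp (- a) = (\<integral>w. exp (- a) * (1 - a * (c w - 1)) \<partial>std_gaussian)"
    using c c_mean by (simp add: algebra_simps)
  also have "\<dots> \<le> (\<integral>w. exp (- a * c w) \<partial>std_gaussian)"
    using c integrable tangent by (intro integral_mono) auto
  finally have "ennreal (exp (- a)) \<le> ennreal (\<integral>w. exp (- a * c w) \<partial>std_gaussian)"
    by (rule ennreal_leI)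
  also have "\<dots> = (\<integral>\<^sup>+w. ennreal (exp (- a * c w)) \<partial>std_gaussian)"
    using integrable by (simp add: nn_integral_eq_integral)
  finally show ?thesis
    by (simp add: c_def)
qed

lemma ln_one_plus_ge_sub_half_square:
  fixes x :: real
  assumes x: "0 \<le> x"
  shows "x - x\<^sup>2 / 2 \<le> ln (1 + x)"
proof -
  let ?f = "\<lambda>x::real. ln (1 + x) - x + x\<^sup>2 / 2"
  have "?f 0 \<le> ?f x"
  proof (rule DERIV_nonneg_imp_nondecreasing[OF x])
    fix y :: real
    assume y: "0 \<le> y" "y \<le> x"
    have "DERIV ?f y :> 1 / (1 + y) - 1 + y"
      using y by (auto intro!: derivative_eq_intros simp: power2_eq_square field_simps)
    moreover have "1 / (1 + y) - 1 + y = y\<^sup>2 / (1 + y)"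
      using y by (simp add: field_simps power2_eq_square)
    ultimately show "\<exists>d. DERIV ?f y :> d \<and> 0 \<le> d"
      using y by force
  qed
  then show ?thesis by simp
qed

lemma inverse_sqrt_one_plus_le_exp:
  fixes t :: real
  assumes t: "0 \<le> t"
  shows "1 / sqrt (1 + 2 * t) \<le> exp (- t + t\<^sup>2)"
proof -
  have "2 * (t - t\<^sup>2) \<le> ln (1 + 2 * t)"
    using ln_one_plus_ge_sub_half_square[of "2 * t"] t by (simp add: power2_eq_square algebra_simps)
  then have "exp (2 * (t - t\<^sup>2)) \<le> 1 + 2 * t"
    using t by (metis exp_le_cancel_iff exp_ln add_pos_nonneg mult_nonneg_nonneg
        zero_le_numeral zero_less_one)
  then have "(exp (t - t\<^sup>2))\<^sup>2 \<le> 1 + 2 * t"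
    by (simp add: power2_eq_square exp_add[symmetric] algebra_simps)
  then have "exp (t - t\<^sup>2) \<le> sqrt (1 + 2 * t)"
    by (rule real_le_rsqrt)
  then have "1 / sqrt (1 + 2 * t) \<le> 1 / exp (t - t\<^sup>2)"
    using t by (intro divide_left_mono) auto
  also have "\<dots> = exp (- (t - t\<^sup>2))"
    by (metis exp_minus inverse_eq_divide)
  finally show ?thesis by simp
qed

lemma nn_integral_std_normal_exp_neg_square:
  fixes a :: real
  assumes a: "0 \<le> a"
  shows "(\<integral>\<^sup>+y. ennreal (std_normal_density y) * ennreal (exp (- (a * y\<^sup>2))) \<partial>lborel)
    = ennreal (1 / sqrt (1 + 2 * a))"
proof -
  define s where "s = 1 / sqrt (1 + 2 * a)"
  have s: "0 < s" "s\<^sup>2 = 1 / (1 + 2 * a)"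
    using a by (simp_all add: s_def power_divide)
  have density: "std_normal_density y * exp (- (a * y\<^sup>2)) = s * normal_density 0 s y" for y
  proof -
    have "sqrt (2 * pi * s\<^sup>2) = sqrt (2 * pi) * s"
      using s(1) by (simp add: real_sqrt_mult)
    then have "normal_density 0 s y = 1 / (sqrt (2 * pi) * s) * exp (- y\<^sup>2 / (2 * s\<^sup>2))"
      by (simp add: normal_density_def)
    also have "- y\<^sup>2 / (2 * s\<^sup>2) = - y\<^sup>2 / 2 + - (a * y\<^sup>2)"
      using a by (simp add: s field_simps)
    finally show ?thesis
      using s by (simp add: std_normal_density_def mult_exp_exp)
  qed
  have "(\<integral>\<^sup>+y. ennreal (std_normal_density y) * ennreal (exp (- (a * y\<^sup>2))) \<partial>lborel)
      = (\<integral>\<^sup>+y. ennreal s * ennreal (normal_density 0 s y) \<partial>lborel)"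
    using s by (simp add: ennreal_mult[symmetric] density)
  also have "\<dots> = ennreal s"
    using s by (simp add: nn_integral_cmult nn_integral_normal_density)
  finally show ?thesis by (simp add: s_def)
qed

lemma nn_integral_std_gaussian_exp_diagonal_le:
  assumes c: "\<And>i. 0 \<le> c i"
  shows "(\<integral>\<^sup>+x. ennreal (exp (- (\<Sum>i\<in>UNIV. c i * (x $ i)\<^sup>2))) \<partial>(std_gaussian :: (real^'n) measure))
       \<le> ennreal (exp (- (\<Sum>i\<in>UNIV. c i) + (\<Sum>i\<in>UNIV. (c i)\<^sup>2)))"
proof -
  have "(\<integral>\<^sup>+x. ennreal (exp (- (\<Sum>i\<in>UNIV. c i * (x $ i)\<^sup>2))) \<partial>(std_gaussian :: (real^'n) measure))
     = (\<integral>\<^sup>+x. (\<Prod>i\<in>UNIV. (\<lambda>i y. ennreal (exp (- (c i * y\<^sup>2)))) i (x $ i)) \<partial>std_gaussian)"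
    by (simp add: exp_sum[symmetric] sum_negf prod_ennreal)
  also have "\<dots> = (\<Prod>i\<in>UNIV. ennreal (1 / sqrt (1 + 2 * c i)))"
    by (subst nn_integral_std_gaussian_prod) (simp_all add: nn_integral_std_normal_exp_neg_square c)
  also have "\<dots> = ennreal (\<Prod>i\<in>UNIV. 1 / sqrt (1 + 2 * c i))"
    using c by (simp add: prod_ennreal)
  also have "\<dots> \<le> ennreal (\<Prod>i\<in>UNIV. exp (- c i + (c i)\<^sup>2))"
    using c inverse_sqrt_one_plus_le_exp by (intro ennreal_leI prod_mono) auto
  also have "(\<Prod>i\<in>UNIV. exp (- c i + (c i)\<^sup>2)) = exp (- (\<Sum>i\<in>UNIV. c i) + (\<Sum>i\<in>UNIV. (c i)\<^sup>2))"
    by (simp add: exp_sum[symmetric] sum.distrib sum_negf sum_subtractf)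
  finally show ?thesis .
qed

section \<open>Gaussian quadratic forms via the spectral theorem\<close>

lemma symmetric_matrix_inner_commute:
  fixes A :: "real^'n^'n"
  assumes "transpose A = A"
  shows "x \<bullet> (A *v y) = (A *v x) \<bullet> y"
  by (metis assms dot_lmul_matrix transpose_matrix_vector)

lemma quadratic_form_le_by_unit_sphere:
  fixes A :: "real^'n^'n"
  assumes W: "subspace W" and y: "y \<in> W"
    and unit: "\<And>z. z \<in> W \<Longrightarrow> norm z = 1 \<Longrightarrow> z \<bullet> (A *v z) \<le> m"
  shows "y \<bullet> (A *v y) \<le> m * (norm y)\<^sup>2"
proof (cases "y = 0")
  case False
  then have "(y /\<^sub>R norm y) \<bullet> (A *v (y /\<^sub>R norm y)) \<le> m"
    using W y by (intro unit) (simp_all add: subspace_scale)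
  then show ?thesis
    using False by (simp add: matrix_vector_mult_scaleR power2_eq_square field_simps)
qed simp

lemma nonpos_if_add_mult_nonpos:
  fixes a K :: real
  assumes "\<And>e. 0 < e \<Longrightarrow> a + e * K \<le> 0"
  shows "a \<le> 0"
proof (rule field_le_epsilon)
  fix d :: real
  assume d: "0 < d"
  define e where "e = d / (\<bar>K\<bar> + 1)"
  have "0 < \<bar>K\<bar> + 1"
    by (metis abs_ge_zero add_nonneg_pos zero_less_one)
  then have e: "0 < e" "e * (\<bar>K\<bar> + 1) = d"
    using d by (simp_all add: e_def)
  have "e * - \<bar>K\<bar> \<le> e * K"
    using e(1) by (intro mult_left_mono) auto
  moreover have "e * \<bar>K\<bar> + e = d"
    using e(2) by (simp add: algebra_simps)
  ultimately show "a \<le> 0 + d"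
    using assms[OF e(1)] e(1) by linarith
qed

lemma rayleigh_quotient_maximizer_eigenvector:
  fixes A :: "real^'n^'n"
  assumes sym: "transpose A = A"
    and W: "subspace W" "\<And>y. y \<in> W \<Longrightarrow> A *v y \<in> W"
    and v: "v \<in> W" "norm v = 1"
    and max: "\<And>y. y \<in> W \<Longrightarrow> y \<bullet> (A *v y) \<le> (v \<bullet> (A *v v)) * (norm y)\<^sup>2"
  shows "A *v v = (v \<bullet> (A *v v)) *\<^sub>R v"
proof -
  define l where "l = v \<bullet> (A *v v)"
  define r where "r = A *v v - l *\<^sub>R v"
  define K where "K = r \<bullet> (A *v r) - l * (r \<bullet> r)"
  have vv: "v \<bullet> v = 1"
    using v(2) by (simp add: norm_eq_1)
  have rW: "r \<in> W"
    unfolding r_def using W v(1) by (simp add: subspace_diff subspace_scale)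
  have rv: "r \<bullet> v = 0"
    by (simp add: r_def l_def inner_diff_left vv inner_commute[of "A *v v" v])
  have rAv: "r \<bullet> (A *v v) = r \<bullet> r"
    by (simp add: r_def inner_diff_left inner_diff_right l_def inner_commute vv)
  moreover have "v \<bullet> (A *v r) = r \<bullet> (A *v v)"
    using symmetric_matrix_inner_commute[OF sym, of v r] by (simp add: inner_commute)
  ultimately have vAr: "v \<bullet> (A *v r) = r \<bullet> r" by simp
  have key: "e * (2 * (r \<bullet> r) + e * K) \<le> 0" for e
  proof -
    have "(v + e *\<^sub>R r) \<bullet> (A *v (v + e *\<^sub>R r)) = l + 2 * e * (r \<bullet> r) + e\<^sup>2 * (r \<bullet> (A *v r))"
      using rAv vAr
      by (simp add: matrix_vector_right_distrib matrix_vector_mult_scaleR inner_add_left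
          inner_add_right l_def power2_eq_square algebra_simps)
    moreover have "(norm (v + e *\<^sub>R r))\<^sup>2 = 1 + e\<^sup>2 * (r \<bullet> r)"
      using rv unfolding power2_norm_eq_inner
      by (simp add: inner_add_left inner_add_right vv inner_commute[of v r] power2_eq_square)
    ultimately show ?thesis
      using max[of "v + e *\<^sub>R r"] W v(1) rW
      by (simp add: subspace_add subspace_scale K_def l_def power2_eq_square algebra_simps)
  qed
  have "2 * (r \<bullet> r) \<le> 0"
  proof (rule nonpos_if_add_mult_nonpos)
    fix e :: real
    assume "0 < e"
    with key[of e] show "2 * (r \<bullet> r) + e * K \<le> 0"
      by (simp add: mult_le_0_iff)
  qed
  then have "r = 0"
    using inner_ge_zero[of r] by simp
  then show ?thesis by (simp add: r_def l_def)
qed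

definition orthonormal_eigenvectors :: "real^'n^'n \<Rightarrow> (real^'n) set \<Rightarrow> bool" where
  "orthonormal_eigenvectors A B \<longleftrightarrow>
     pairwise orthogonal B \<and> (\<forall>b\<in>B. norm b = 1 \<and> (\<exists>l. A *v b = l *\<^sub>R b))"

lemma orthonormal_eigenvectors_independent:
  "orthonormal_eigenvectors A B \<Longrightarrow> independent B"
  unfolding orthonormal_eigenvectors_def
  by (metis norm_zero zero_neq_one pairwise_orthogonal_independent)

lemma eigenvector_orthogonal_exists:
  fixes A :: "real^'n^'n"
  assumes sym: "transpose A = A" and B: "orthonormal_eigenvectors A B" and span: "span B \<noteq> UNIV"
  obtains v where "norm v = 1" "\<forall>b\<in>B. orthogonal b v" "A *v v = (v \<bullet> (A *v v)) *\<^sub>R v"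
proof -
  define W where "W = {y. \<forall>b\<in>B. orthogonal b y}"
  have W: "subspace W"
    by (simp add: W_def subspace_orthogonal_to_vectors)
  have invariant: "A *v y \<in> W" if "y \<in> W" for y
  proof -
    have "orthogonal b (A *v y)" if "b \<in> B" for b
    proof -
      obtain l where "A *v b = l *\<^sub>R b"
        using B \<open>b \<in> B\<close> by (auto simp: orthonormal_eigenvectors_def)
      then show ?thesis
        using \<open>y \<in> W\<close> \<open>b \<in> B\<close> symmetric_matrix_inner_commute[OF sym, of b y]
        by (simp add: W_def orthogonal_def)
    qed
    then show ?thesis by (simp add: W_def)
  qed
  obtain x where "x \<noteq> 0" "\<And>y. y \<in> span B \<Longrightarrow> orthogonal x y"
    using orthogonal_to_subspace_exists_gen[of B UNIV] span by auto
  then have x: "x /\<^sub>R norm x \<in> W \<inter> sphere 0 1"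
    by (auto simp: W_def orthogonal_commute span_base)
  have "compact (W \<inter> sphere 0 1)"
    using W by (metis closed_subspace compact_Int_closed compact_sphere inf_commute)
  moreover have "continuous_on (W \<inter> sphere 0 1) (\<lambda>y. y \<bullet> (A *v y))"
    by (intro continuous_intros)
  ultimately obtain v where v: "v \<in> W \<inter> sphere 0 1"
    and max: "\<forall>z\<in>W \<inter> sphere 0 1. z \<bullet> (A *v z) \<le> v \<bullet> (A *v v)"
    using continuous_attains_sup x by blast
  have "y \<bullet> (A *v y) \<le> (v \<bullet> (A *v v)) * (norm y)\<^sup>2" if "y \<in> W" for y
    using W that by (rule quadratic_form_le_by_unit_sphere) (use max in auto)
  then have "A *v v = (v \<bullet> (A *v v)) *\<^sub>R v"
    using v by (intro rayleigh_quotient_maximizer_eigenvector[OF sym W invariant]) auto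
  then show thesis
    using v that by (auto simp: W_def)
qed

lemma orthonormal_eigenbasis_exists:
  fixes A :: "real^'n^'n"
  assumes sym: "transpose A = A"
  obtains B where "orthonormal_eigenvectors A B" "span B = UNIV"
proof -
  have "\<exists>B. orthonormal_eigenvectors A B \<and> (\<forall>B'. orthonormal_eigenvectors A B' \<longrightarrow> card B' \<le> card B)"
  proof (rule ex_has_greatest_nat[where k = "{}" and b = "Suc CARD('n)"])
    show "orthonormal_eigenvectors A {}"
      by (simp add: orthonormal_eigenvectors_def)
    show "\<forall>B. orthonormal_eigenvectors A B \<longrightarrow> card B < Suc CARD('n)"
      using independent_bound[OF orthonormal_eigenvectors_independent, of A]
      by (simp add: le_imp_less_Suc)
  qed
  then obtain B where B: "orthonormal_eigenvectors A B"
    and largest: "\<And>B'. orthonormal_eigenvectors A B' \<Longrightarrow> card B' \<le> card B"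
    by blast
  have "span B = UNIV"
  proof (rule ccontr)
    assume "span B \<noteq> UNIV"
    then obtain v where v: "norm v = 1" "\<forall>b\<in>B. orthogonal b v" "A *v v = (v \<bullet> (A *v v)) *\<^sub>R v"
      using eigenvector_orthogonal_exists[OF sym B] by blast
    then have "v \<notin> B"
      by (metis orthogonal_self norm_zero zero_neq_one)
    moreover have "orthonormal_eigenvectors A (insert v B)"
      using B v by (auto simp: orthonormal_eigenvectors_def pairwise_insert orthogonal_commute)
    moreover have "finite B"
      using independent_bound[OF orthonormal_eigenvectors_independent[OF B]] by simp
    ultimately show False
      using largest[of "insert v B"] by simp
  qed
  then show thesis
    using B that by blast
qed

lemma spectral_decomposition:
  fixes A :: "real^'n^'n"
  assumes sym: "transpose A = A"
  obtains f :: "'n \<Rightarrow> real^'n" and d :: "'n \<Rightarrow> real"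
  where "\<And>i j. f i \<bullet> f j = (if i = j then 1 else 0)"
    and "\<And>x. A *v x = (\<Sum>i\<in>UNIV. (d i * (f i \<bullet> x)) *\<^sub>R f i)"
proof -
  obtain B where B: "orthonormal_eigenvectors A B" "span B = UNIV"
    using orthonormal_eigenbasis_exists[OF sym] .
  have independent: "independent B" and finite: "finite B"
    using independent_bound[OF orthonormal_eigenvectors_independent[OF B(1)]]
      orthonormal_eigenvectors_independent[OF B(1)] by auto
  have "card B = CARD('n)"
    using basis_card_eq_dim[of B UNIV] independent B(2) by simp
  then obtain f where f: "bij_betw f (UNIV :: 'n set) B"
    using finite_same_card_bij[of "UNIV :: 'n set" B] finite by auto
  have orthonormal: "f i \<bullet> f j = (if i = j then 1 else 0)" for i j
    using B(1) bij_betw_apply[OF f] bij_betw_imp_inj_on[OF f]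
    by (auto simp: orthonormal_eigenvectors_def pairwise_def orthogonal_def norm_eq_1 inj_on_eq_iff)
  define d where "d i = f i \<bullet> (A *v f i)" for i
  have eigen: "A *v f i = d i *\<^sub>R f i" for i
  proof -
    obtain l where "A *v f i = l *\<^sub>R f i"
      using B(1) bij_betw_apply[OF f] by (auto simp: orthonormal_eigenvectors_def)
    moreover from this have "d i = l"
      using orthonormal[of i i] by (simp add: d_def)
    ultimately show ?thesis by simp
  qed
  have expand: "x = (\<Sum>i\<in>UNIV. (x \<bullet> f i) *\<^sub>R f i)" for x
    using orthonormal_basis_expand[of B x] B finite
      sum.reindex_bij_betw[OF f, of "\<lambda>b. (x \<bullet> b) *\<^sub>R b"]
    by (simp add: orthonormal_eigenvectors_def)
  have "A *v x = (\<Sum>i\<in>UNIV. (x \<bullet> f i) *\<^sub>R (A *v f i))" for x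
    by (subst expand)
       (simp add: linear_sum[OF matrix_vector_mul_linear] matrix_vector_mult_scaleR o_def)
  then have "A *v x = (\<Sum>i\<in>UNIV. (d i * (f i \<bullet> x)) *\<^sub>R f i)" for x
    by (simp add: eigen inner_commute mult.commute)
  with orthonormal show thesis
    by (rule that)
qed

lemma norm_power2_orthonormal_sum:
  fixes f :: "'n::finite \<Rightarrow> real^'m"
  assumes "\<And>i j. f i \<bullet> f j = (if i = j then 1 else 0)"
  shows "(norm (\<Sum>i\<in>UNIV. c i *\<^sub>R f i))\<^sup>2 = (\<Sum>i\<in>UNIV. (c i)\<^sup>2)"
  unfolding power2_norm_eq_inner
  by (simp add: inner_sum_left inner_sum_right assms if_distrib[of "\<lambda>x. _ * x"] sum.delta
      power2_eq_square cong: if_cong)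

lemma frob_norm_power2: "(frob_norm A)\<^sup>2 = (\<Sum>i\<in>UNIV. \<Sum>j\<in>UNIV. (A $ i $ j)\<^sup>2)"
  by (simp add: frob_norm_def sum_nonneg)

context
  fixes A :: "real^'n^'n" and f :: "'n \<Rightarrow> real^'n" and d :: "'n \<Rightarrow> real"
  assumes orthonormal: "\<And>i j. f i \<bullet> f j = (if i = j then 1 else 0)"
    and decomposition: "\<And>x. A *v x = (\<Sum>i\<in>UNIV. (d i * (f i \<bullet> x)) *\<^sub>R f i)"
begin

lemma spectral_eigenvector: "A *v f i = d i *\<^sub>R f i"
  by (simp add: decomposition orthonormal if_distrib[of "\<lambda>c. c *\<^sub>R f _"]
      if_distrib[of "\<lambda>c. d _ * c"] sum.delta cong: if_cong)

lemma spectral_quadratic_form: "x \<bullet> (A *v x) = (\<Sum>i\<in>UNIV. d i * (f i \<bullet> x)\<^sup>2)"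
  by (simp add: decomposition inner_sum_right inner_commute power2_eq_square mult.assoc)

lemma spectral_trace: "trace A = (\<Sum>i\<in>UNIV. d i)"
proof -
  have "A $ k $ k = (A *v axis k 1) $ k" for k
    by (simp add: matrix_vector_mult_basis column_def)
  then have "trace A = (\<Sum>k\<in>UNIV. \<Sum>i\<in>UNIV. d i * (f i $ k)\<^sup>2)"
    by (simp add: trace_def decomposition inner_axis power2_eq_square mult.assoc)
  also have "\<dots> = (\<Sum>i\<in>UNIV. d i * (norm (f i))\<^sup>2)"
    by (subst sum.swap) (simp add: norm_power2_vec sum_distrib_left)
  finally show ?thesis
    using orthonormal by (simp add: power2_norm_eq_inner)
qed

lemma spectral_frob_norm: "(frob_norm A)\<^sup>2 = (\<Sum>i\<in>UNIV. (d i)\<^sup>2)"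
proof -
  have "(frob_norm A)\<^sup>2 = (\<Sum>j\<in>UNIV. (norm (A *v axis j 1))\<^sup>2)"
    by (simp add: frob_norm_power2 norm_power2_vec matrix_vector_mult_basis column_def)
       (rule sum.swap)
  also have "\<dots> = (\<Sum>j\<in>UNIV. \<Sum>i\<in>UNIV. (d i * f i $ j)\<^sup>2)"
    by (simp add: decomposition norm_power2_orthonormal_sum[OF orthonormal] inner_axis)
  also have "\<dots> = (\<Sum>i\<in>UNIV. (d i)\<^sup>2 * (norm (f i))\<^sup>2)"
    by (subst sum.swap) (simp add: norm_power2_vec power_mult_distrib sum_distrib_left)
  finally show ?thesis
    using orthonormal by (simp add: power2_norm_eq_inner)
qed

end

lemma orthogonal_matrix_of_orthonormal_rows:
  fixes f :: "'n \<Rightarrow> real^'n"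
  assumes "\<And>i j. f i \<bullet> f j = (if i = j then 1 else 0)"
  shows "orthogonal_matrix (\<chi> i. f i)"
  using assms by (auto simp: orthogonal_matrix_orthonormal_rows row_def norm_eq_1 orthogonal_def)

lemma nn_integral_std_gaussian_exp_psd_form_le:
  fixes Q :: "real^'n^'n"
  assumes Q: "psd_matrix Q" and \<mu>: "0 \<le> \<mu>"
  shows "(\<integral>\<^sup>+x. ennreal (exp (- \<mu> * (x \<bullet> (Q *v x)))) \<partial>(std_gaussian :: (real^'n) measure))
    \<le> ennreal (exp (- \<mu> * trace Q + \<mu>\<^sup>2 * (frob_norm Q)\<^sup>2))"
proof -
  have "transpose Q = Q"
    using Q by (simp add: psd_matrix_def)
  then obtain f :: "'n \<Rightarrow> real^'n" and d
    where orthonormal: "\<And>i j. f i \<bullet> f j = (if i = j then 1 else 0)"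
    and decomposition: "\<And>x. Q *v x = (\<Sum>i\<in>UNIV. (d i * (f i \<bullet> x)) *\<^sub>R f i)"
    using spectral_decomposition by blast
  note spectral = spectral_quadratic_form[OF orthonormal decomposition]
    spectral_trace[OF orthonormal decomposition] spectral_frob_norm[OF orthonormal decomposition]
  have d: "0 \<le> d i" for i
  proof -
    have "0 \<le> f i \<bullet> (Q *v f i)"
      using Q by (simp add: psd_matrix_def)
    then show ?thesis
      by (simp add: spectral_eigenvector[OF orthonormal decomposition] orthonormal)
  qed
  define P :: "real^'n^'n" where "P = (\<chi> i. f i)"
  have P: "orthogonal_transformation ((*v) P)"
    using orthogonal_matrix_of_orthonormal_rows[OF orthonormal]
    by (simp add: P_def orthogonal_transformation_matrix)
  have P_apply: "(P *v x) $ i = f i \<bullet> x" for x i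
    by (simp add: P_def matrix_vector_mult_def inner_vec_def)
  define g where "g y = ennreal (exp (- (\<Sum>i\<in>UNIV. (\<mu> * d i) * (y $ i)\<^sup>2)))" for y :: "real^'n"
  have "(\<integral>\<^sup>+x. ennreal (exp (- \<mu> * (x \<bullet> (Q *v x)))) \<partial>(std_gaussian :: (real^'n) measure))
      = (\<integral>\<^sup>+x. g (P *v x) \<partial>std_gaussian)"
    by (simp add: g_def P_apply spectral(1) sum_distrib_left mult.assoc sum_negf)
  also have "\<dots> = (\<integral>\<^sup>+x. g x \<partial>std_gaussian)"
    using P by (rule nn_integral_std_gaussian_orthogonal_transformation) (simp add: g_def)
  also have "\<dots> \<le> ennreal (exp (- (\<Sum>i\<in>UNIV. \<mu> * d i) + (\<Sum>i\<in>UNIV. (\<mu> * d i)\<^sup>2)))"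
    unfolding g_def using \<mu> d by (intro nn_integral_std_gaussian_exp_diagonal_le) simp
  also have "\<dots> = ennreal (exp (- \<mu> * trace Q + \<mu>\<^sup>2 * (frob_norm Q)\<^sup>2))"
    by (simp add: spectral sum_distrib_left power_mult_distrib sum_negf)
  finally show ?thesis .
qed

section \<open>Haar measure on the orthogonal group\<close>

lemma continuous_on_matrix_matrix_mult [continuous_intros]:
  fixes f :: "'a::topological_space \<Rightarrow> real^'n^'m" and g :: "'a \<Rightarrow> real^'k^'n"
  shows "continuous_on S f \<Longrightarrow> continuous_on S g \<Longrightarrow> continuous_on S (\<lambda>x. f x ** g x)"
  unfolding matrix_matrix_mult_def by (intro continuous_intros)

lemma continuous_on_transpose [continuous_intros]:
  fixes f :: "'a::topological_space \<Rightarrow> real^'n^'m"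
  shows "continuous_on S f \<Longrightarrow> continuous_on S (\<lambda>x. transpose (f x))"
  unfolding transpose_def by (intro continuous_intros)

lemma continuous_on_matrix_vector_mult [continuous_intros]:
  fixes f :: "'a::topological_space \<Rightarrow> real^'n^'m"
  shows "continuous_on S f \<Longrightarrow> continuous_on S g \<Longrightarrow> continuous_on S (\<lambda>x. f x *v g x)"
  unfolding matrix_vector_mult_def by (intro continuous_intros)

lemma continuous_on_column [continuous_intros]:
  fixes f :: "'a::topological_space \<Rightarrow> real^'n^'m"
  shows "continuous_on S f \<Longrightarrow> continuous_on S (\<lambda>x. column j (f x))"
  unfolding column_def by (intro continuous_intros)

lemma borel_measurable_continuous_sets_borel:
  assumes "sets M = sets borel" "continuous_on UNIV f"
  shows "f \<in> borel_measurable M"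
  by (subst measurable_cong_sets[OF assms(1) refl])
     (rule borel_measurable_continuous_onI[OF assms(2)])

lemma sets_pair_measure_borel:
  fixes M :: "'a::second_countable_topology measure"
    and N :: "'b::second_countable_topology measure"
  assumes "sets M = sets borel" "sets N = sets borel"
  shows "sets (M \<Otimes>\<^sub>M N) = sets borel"
  using sets_pair_measure_cong[OF assms] by (simp only: borel_prod)

locale haar_measure =
  fixes M :: "(real^'n^'n) measure"
  assumes haar: "haar_orthogonal M"
begin

lemma sets_eq [measurable_cong]: "sets M = sets borel"
  using haar by (simp add: haar_orthogonal_def)

lemma space_eq [simp]: "space M = UNIV"
  using sets_eq_imp_space_eq[OF sets_eq] by simp

sublocale prob_space M
  using haar by (simp add: haar_orthogonal_def)

lemma AE_orthogonal_matrix: "AE U in M. orthogonal_matrix U"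
proof -
  have "prob {U. orthogonal_matrix U} = 1"
    using haar by (simp add: haar_orthogonal_def emeasure_eq_measure)
  then have "AE U in M. U \<in> {U. orthogonal_matrix U}"
    by (rule AE_prob_1)
  then show ?thesis by simp
qed

lemma nn_integral_left_mult:
  assumes A: "orthogonal_matrix A" and f: "f \<in> borel_measurable borel"
  shows "(\<integral>\<^sup>+U. f (A ** U) \<partial>M) = (\<integral>\<^sup>+U. f U \<partial>M)"
proof -
  have "(\<lambda>U. A ** U) \<in> M \<rightarrow>\<^sub>M borel"
    by (rule borel_measurable_continuous_sets_borel[OF sets_eq]) (intro continuous_intros)
  then have "(\<integral>\<^sup>+U. f (A ** U) \<partial>M) = (\<integral>\<^sup>+U. f U \<partial>distr M borel (\<lambda>U. A ** U))"
    using f by (simp add: nn_integral_distr)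
  also have "distr M borel (\<lambda>U. A ** U) = M"
    using haar A by (simp add: haar_orthogonal_def)
  finally show ?thesis .
qed

text \<open>Inversion invariance: integrate \<open>f (Y\<^sup>T X)\<close> over \<open>M \<Otimes> M\<close> in both orders and use
  left invariance in each variable.\<close>

lemma nn_integral_transpose:
  assumes f: "f \<in> borel_measurable borel"
  shows "(\<integral>\<^sup>+U. f (transpose U) \<partial>M) = (\<integral>\<^sup>+U. f U \<partial>M)"
proof -
  have space_1: "emeasure M UNIV = 1"
    using emeasure_space_1 by simp
  interpret pair_prob_space M M ..
  have f_transpose: "(\<lambda>U. f (transpose U)) \<in> borel_measurable borel"
    using f by (rule measurable_compose[rotated])
      (intro borel_measurable_continuous_onI continuous_intros)
  define F where "F p = f (transpose (snd p) ** fst p)" for p :: "(real^'n^'n) \<times> (real^'n^'n)"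
  have "(\<lambda>p. transpose (snd p) ** fst p) \<in> borel_measurable (M \<Otimes>\<^sub>M M)"
    by (rule borel_measurable_continuous_sets_borel[OF sets_pair_measure_borel[OF sets_eq sets_eq]])
       (intro continuous_intros)
  then have F: "F \<in> borel_measurable (M \<Otimes>\<^sub>M M)"
    unfolding F_def using f by (rule measurable_compose)
  have "AE Y in M. (\<integral>\<^sup>+X. F (X, Y) \<partial>M) = (\<integral>\<^sup>+U. f U \<partial>M)"
    using AE_orthogonal_matrix
    by eventually_elim (use nn_integral_left_mult[OF _ f] in \<open>simp add: F_def\<close>)
  then have "(\<integral>\<^sup>+U. f U \<partial>M) = (\<integral>\<^sup>+Y. (\<integral>\<^sup>+X. F (X, Y) \<partial>M) \<partial>M)"
    by (simp add: nn_integral_cong_AE space_1)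
  also have "\<dots> = (\<integral>\<^sup>+X. (\<integral>\<^sup>+Y. F (X, Y) \<partial>M) \<partial>M)"
    by (rule Fubini[OF F])
  also have "AE X in M. (\<integral>\<^sup>+Y. F (X, Y) \<partial>M) = (\<integral>\<^sup>+U. f (transpose U) \<partial>M)"
    using AE_orthogonal_matrix
  proof eventually_elim
    case (elim X)
    then show ?case
      using nn_integral_left_mult[OF _ f_transpose, of "transpose X"]
      by (simp add: F_def matrix_transpose_mul)
  qed
  then have "(\<integral>\<^sup>+X. (\<integral>\<^sup>+Y. F (X, Y) \<partial>M) \<partial>M) = (\<integral>\<^sup>+U. f (transpose U) \<partial>M)"
    by (simp add: nn_integral_cong_AE space_1)
  finally show ?thesis ..
qed

lemma nn_integral_right_mult:
  assumes B: "orthogonal_matrix B" and f: "f \<in> borel_measurable borel"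
  shows "(\<integral>\<^sup>+U. f (U ** B) \<partial>M) = (\<integral>\<^sup>+U. f U \<partial>M)"
proof -
  have measurable: "(\<lambda>U. f (transpose U)) \<in> borel_measurable borel"
    "(\<lambda>U. f (transpose U ** B)) \<in> borel_measurable borel"
    by (rule measurable_compose[OF _ f], intro borel_measurable_continuous_onI continuous_intros)+
  have "(\<integral>\<^sup>+U. f (U ** B) \<partial>M) = (\<integral>\<^sup>+U. f (transpose U ** B) \<partial>M)"
    using nn_integral_transpose[OF measurable(2)] by simp
  also have "\<dots> = (\<integral>\<^sup>+U. f (transpose (transpose B ** U)) \<partial>M)"
    by (simp add: matrix_transpose_mul)
  also have "\<dots> = (\<integral>\<^sup>+U. f (transpose U) \<partial>M)"
    using B by (intro nn_integral_left_mult[OF _ measurable(1)]) simp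
  also have "\<dots> = (\<integral>\<^sup>+U. f U \<partial>M)"
    by (rule nn_integral_transpose[OF f])
  finally show ?thesis .
qed

end

section \<open>Quadratic forms in the columns of a Haar matrix\<close>

definition column_form :: "real^'n^'n \<Rightarrow> 'n \<Rightarrow> real^'n^'n \<Rightarrow> real" where
  "column_form Q j U = column j U \<bullet> (Q *v column j U)"

lemma continuous_on_column_form [continuous_intros]:
  "continuous_on S f \<Longrightarrow> continuous_on S (\<lambda>x. column_form Q j (f x))"
  unfolding column_form_def by (intro continuous_intros)

lemma column_form_nonneg: "psd_matrix Q \<Longrightarrow> 0 \<le> column_form Q j U"
  by (simp add: column_form_def psd_matrix_def)

context haar_measure
begin

lemma nn_integral_column_form_rotation:
  fixes g :: "real \<Rightarrow> ennreal"
  assumes g: "g \<in> borel_measurable borel"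
  shows "(\<integral>\<^sup>+U. g ((norm w)\<^sup>2 * column_form Q j U) \<partial>M) = (\<integral>\<^sup>+U. g ((U *v w) \<bullet> (Q *v (U *v w))) \<partial>M)"
proof (cases "w = 0")
  case False
  define z where "z = w /\<^sub>R norm w"
  have "norm z = 1"
    using False by (simp add: z_def)
  then obtain B where B: "orthogonal_matrix B" "B *v axis j 1 = z"
    using orthogonal_matrix_exists_basis by metis
  have "(U *v w) \<bullet> (Q *v (U *v w)) = (norm w)\<^sup>2 * column_form Q j (U ** B)" for U
  proof -
    have "column j (U ** B) = U *v z"
      by (metis B(2) matrix_vector_mul_assoc matrix_vector_mult_basis)
    moreover have "U *v w = norm w *\<^sub>R (U *v z)"
      using False by (simp add: z_def matrix_vector_mult_scaleR)
    ultimately show ?thesis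
      by (simp add: column_form_def matrix_vector_mult_scaleR power2_eq_square)
  qed
  moreover have "(\<lambda>U. g ((norm w)\<^sup>2 * column_form Q j U)) \<in> borel_measurable borel"
    by (intro measurable_compose[OF _ g] borel_measurable_continuous_onI continuous_intros)
  note nn_integral_right_mult[OF B(1) this]
  ultimately show ?thesis by simp
qed simp

text \<open>By the previous lemma and Fubini, \<open>|w|\<^sup>2 u\<^sub>j\<^sup>T Q u\<^sub>j\<close> may be replaced by
  \<open>(U w)\<^sup>T Q (U w)\<close>, and \<open>U w\<close> is again standard Gaussian.\<close>

lemma nn_integral_std_gaussian_column_form:
  fixes g :: "real \<Rightarrow> ennreal"
  assumes g: "g \<in> borel_measurable borel"
  shows "(\<integral>\<^sup>+U. (\<integral>\<^sup>+w. g ((norm w)\<^sup>2 * column_form Q j U) \<partial>(std_gaussian :: (real^'n) measure)) \<partial>M)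
    = (\<integral>\<^sup>+w. g (w \<bullet> (Q *v w)) \<partial>(std_gaussian :: (real^'n) measure))"
proof -
  let ?G = "std_gaussian :: (real^'n) measure"
  interpret G: prob_space ?G
    by (rule prob_space_std_gaussian)
  interpret pair_sigma_finite M ?G ..
  have sets: "sets (M \<Otimes>\<^sub>M ?G) = sets borel"
    by (rule sets_pair_measure_borel[OF sets_eq sets_std_gaussian])
  define F where "F p = g ((norm (snd p))\<^sup>2 * column_form Q j (fst p))"
    for p :: "(real^'n^'n) \<times> (real^'n)"
  define F' where "F' p = g ((fst p *v snd p) \<bullet> (Q *v (fst p *v snd p)))"
    for p :: "(real^'n^'n) \<times> (real^'n)"
  have F: "F \<in> borel_measurable (M \<Otimes>\<^sub>M ?G)" "F' \<in> borel_measurable (M \<Otimes>\<^sub>M ?G)"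
    unfolding F_def F'_def
    by (intro measurable_compose[OF _ g] borel_measurable_continuous_sets_borel[OF sets]
        continuous_intros)+
  have "(\<integral>\<^sup>+U. (\<integral>\<^sup>+w. F (U, w) \<partial>?G) \<partial>M) = (\<integral>\<^sup>+w. (\<integral>\<^sup>+U. F (U, w) \<partial>M) \<partial>?G)"
    by (rule Fubini[OF F(1), symmetric])
  also have "\<dots> = (\<integral>\<^sup>+w. (\<integral>\<^sup>+U. F' (U, w) \<partial>M) \<partial>?G)"
    by (simp add: F_def F'_def nn_integral_column_form_rotation[OF g])
  also have "\<dots> = (\<integral>\<^sup>+U. (\<integral>\<^sup>+w. F' (U, w) \<partial>?G) \<partial>M)"
    by (rule Fubini[OF F(2)])
  also have "\<dots> = (\<integral>\<^sup>+U. (\<integral>\<^sup>+w. g (w \<bullet> (Q *v w)) \<partial>?G) \<partial>M)"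
  proof (intro nn_integral_cong_AE)
    show "AE U in M. (\<integral>\<^sup>+w. F' (U, w) \<partial>?G) = (\<integral>\<^sup>+w. g (w \<bullet> (Q *v w)) \<partial>?G)"
      using AE_orthogonal_matrix
    proof eventually_elim
      case (elim U)
      then have "orthogonal_transformation ((*v) U)"
        by (simp add: orthogonal_transformation_matrix)
      moreover have "(\<lambda>w. g (w \<bullet> (Q *v w))) \<in> borel_measurable borel"
        by (intro measurable_compose[OF _ g] borel_measurable_continuous_onI continuous_intros)
      ultimately have "(\<integral>\<^sup>+w. g ((U *v w) \<bullet> (Q *v (U *v w))) \<partial>?G) = (\<integral>\<^sup>+w. g (w \<bullet> (Q *v w)) \<partial>?G)"
        by (rule nn_integral_std_gaussian_orthogonal_transformation)
      then show ?case
        by (simp add: F'_def)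
    qed
  qed
  also have "\<dots> = (\<integral>\<^sup>+w. g (w \<bullet> (Q *v w)) \<partial>?G)"
    using emeasure_space_1 by simp
  finally show ?thesis
    by (simp add: F_def)
qed

lemma nn_integral_exp_column_form_le:
  assumes Q: "psd_matrix Q" and t: "0 \<le> t"
  defines "\<mu> \<equiv> t / CARD('n)"
  shows "(\<integral>\<^sup>+U. ennreal (exp (- t * column_form Q j U)) \<partial>M)
    \<le> ennreal (exp (- \<mu> * trace Q + \<mu>\<^sup>2 * (frob_norm Q)\<^sup>2))"
proof -
  let ?G = "std_gaussian :: (real^'n) measure"
  have "(\<integral>\<^sup>+U. ennreal (exp (- t * column_form Q j U)) \<partial>M)
      \<le> (\<integral>\<^sup>+U. (\<integral>\<^sup>+w. ennreal (exp (- \<mu> * ((norm w)\<^sup>2 * column_form Q j U))) \<partial>?G) \<partial>M)"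
  proof (rule nn_integral_mono)
    fix U
    have "ennreal (exp (- (t * column_form Q j U)))
        \<le> (\<integral>\<^sup>+w. ennreal (exp (- (t * column_form Q j U) * ((norm w)\<^sup>2 / CARD('n)))) \<partial>?G)"
      using t column_form_nonneg[OF Q] by (intro exp_le_nn_integral_std_gaussian_exp_norm) simp
    then show "ennreal (exp (- t * column_form Q j U))
        \<le> (\<integral>\<^sup>+w. ennreal (exp (- \<mu> * ((norm w)\<^sup>2 * column_form Q j U))) \<partial>?G)"
      by (simp add: \<mu>_def ac_simps)
  qed
  also have "\<dots> = (\<integral>\<^sup>+w. ennreal (exp (- \<mu> * (w \<bullet> (Q *v w)))) \<partial>?G)"
    by (rule nn_integral_std_gaussian_column_form) measurable
  also have "\<dots> \<le> ennreal (exp (- \<mu> * trace Q + \<mu>\<^sup>2 * (frob_norm Q)\<^sup>2))"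
    using t by (intro nn_integral_std_gaussian_exp_psd_form_le Q) (simp add: \<mu>_def)
  finally show ?thesis .
qed

end

lemma sum_UNIV_Plus:
  "(\<Sum>k\<in>UNIV. g k) = (\<Sum>a\<in>UNIV. g (Inl a)) + (\<Sum>b\<in>UNIV. g (Inr b))"
  for g :: "'a::finite + 'b::finite \<Rightarrow> 'c::comm_monoid_add"
  using sum.Plus[of "UNIV :: 'a set" "UNIV :: 'b set" g] by (simp add: o_def)

lemma trace_block_diag: "trace (block_diag Q R) = trace Q + trace R"
  by (simp add: trace_def block_diag_def sum_UNIV_Plus)

lemma frob_norm_block_diag:
  "(frob_norm (block_diag Q R))\<^sup>2 = (frob_norm Q)\<^sup>2 + (frob_norm R)\<^sup>2"
  by (simp add: frob_norm_power2 block_diag_def sum_UNIV_Plus)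

lemma psd_matrix_trace_nonneg:
  assumes "psd_matrix Q"
  shows "0 \<le> trace Q"
proof -
  have "0 \<le> Q $ i $ i" for i
    using assms[unfolded psd_matrix_def, THEN conjunct2, rule_format, of "axis i 1"]
    by (simp add: matrix_vector_mult_basis column_def inner_axis')
  then show ?thesis
    by (simp add: trace_def sum_nonneg)
qed

lemma sum_column_form:
  assumes "orthogonal_matrix U"
  shows "(\<Sum>j\<in>UNIV. column_form Q j U) = trace Q"
proof -
  have "column_form Q j U = (transpose U ** (Q ** U)) $ j $ j" for j
    by (simp add: column_form_def column_def inner_vec_def matrix_vector_mult_def
        matrix_matrix_mult_def transpose_def sum_distrib_left mult.assoc)
  then have "(\<Sum>j\<in>UNIV. column_form Q j U) = trace (transpose U ** (Q ** U))"
    by (simp add: trace_def)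
  also have "\<dots> = trace (Q ** (U ** transpose U))"
    by (subst trace_mul_sym) (simp add: matrix_mul_assoc)
  finally show ?thesis
    using assms by (simp add: orthogonal_matrix_def)
qed

lemma min_diag_column_form:
  "min_diag Q R U V = Min (range (\<lambda>j. column_form Q j U + column_form R j V))"
  by (simp add: min_diag_def column_form_def)

lemma min_diag_le_average:
  fixes Q R U V :: "real^'n^'n"
  assumes "orthogonal_matrix U" "orthogonal_matrix V"
  shows "min_diag Q R U V \<le> (trace Q + trace R) / CARD('n)"
proof -
  have "CARD('n) * min_diag Q R U V \<le> (\<Sum>j\<in>UNIV. column_form Q j U + column_form R j V)"
    unfolding min_diag_column_form by (rule sum_bounded_below) simp
  also have "\<dots> = trace Q + trace R"
    using assms by (simp add: sum.distrib sum_column_form)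
  finally show ?thesis
    by (simp add: field_simps)
qed

section \<open>Tail bounds for the minimal diagonal entry\<close>

lemma (in pair_sigma_finite) emeasure_sum_less_le_exp:
  fixes f :: "'a \<Rightarrow> real" and g :: "'b \<Rightarrow> real"
  assumes f [measurable]: "f \<in> borel_measurable M1" and g [measurable]: "g \<in> borel_measurable M2"
    and s: "0 \<le> s"
  shows "emeasure (M1 \<Otimes>\<^sub>M M2) {p \<in> space (M1 \<Otimes>\<^sub>M M2). f (fst p) + g (snd p) < x}
    \<le> ennreal (exp (s * x)) * (\<integral>\<^sup>+u. ennreal (exp (- s * f u)) \<partial>M1)
        * (\<integral>\<^sup>+v. ennreal (exp (- s * g v)) \<partial>M2)"
proof -
  let ?E = "{p \<in> space (M1 \<Otimes>\<^sub>M M2). f (fst p) + g (snd p) < x}"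
  define h where
    "h p = ennreal (exp (s * x)) * ennreal (exp (- s * f (fst p))) * ennreal (exp (- s * g (snd p)))"
    for p
  have "indicator ?E p \<le> h p" for p
  proof (cases "p \<in> ?E")
    case True
    then have "1 \<le> exp (s * (x - (f (fst p) + g (snd p))))"
      using s by simp
    then show ?thesis
      using True by (simp add: h_def ennreal_mult'[symmetric] mult_exp_exp algebra_simps)
  qed simp
  then have "emeasure (M1 \<Otimes>\<^sub>M M2) ?E \<le> (\<integral>\<^sup>+p. h p \<partial>(M1 \<Otimes>\<^sub>M M2))"
    by (simp add: nn_integral_mono flip: nn_integral_indicator)
  also have "\<dots> = (\<integral>\<^sup>+u. (\<integral>\<^sup>+v. h (u, v) \<partial>M2) \<partial>M1)"
    by (rule M2.nn_integral_fst[symmetric]) (simp add: h_def)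
  also have "\<dots> = ennreal (exp (s * x)) * (\<integral>\<^sup>+u. ennreal (exp (- s * f u)) \<partial>M1)
      * (\<integral>\<^sup>+v. ennreal (exp (- s * g v)) \<partial>M2)"
    by (simp add: h_def nn_integral_cmult nn_integral_multc mult.assoc)
  finally show ?thesis .
qed

(* \<mu> minimises the left-hand side. *)
lemma chernoff_exponent_le:
  fixes T F n \<gamma> :: real
  assumes F: "0 < F" and n: "0 < n" and \<gamma>: "0 \<le> \<gamma>" "\<gamma> \<le> 1"
  defines "\<mu> \<equiv> T * (1 + \<gamma>) / (4 * F)"
  shows "\<mu> * n * (T / (2 * n) * (1 - \<gamma>)) - \<mu> * T + \<mu>\<^sup>2 * F \<le> - (T\<^sup>2 / (4 * F)) * \<gamma>\<^sup>2"
proof -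
  have "\<mu> * n * (T / (2 * n) * (1 - \<gamma>)) - \<mu> * T + \<mu>\<^sup>2 * F = - (T * (1 + \<gamma>))\<^sup>2 / (16 * F)"
    using F n by (simp add: \<mu>_def power2_eq_square field_simps)
  also have "\<dots> \<le> - (2 * T * \<gamma>)\<^sup>2 / (16 * F)"
  proof -
    have "\<bar>T\<bar> * (2 * \<gamma>) \<le> \<bar>T\<bar> * (1 + \<gamma>)"
      using \<gamma> by (intro mult_left_mono) auto
    then have "\<bar>2 * T * \<gamma>\<bar> \<le> \<bar>T * (1 + \<gamma>)\<bar>"
      using \<gamma> by (simp add: abs_mult ac_simps)
    then show ?thesis
      using F by (simp add: abs_le_square_iff divide_right_mono)
  qed
  also have "\<dots> = - (T\<^sup>2 / (4 * F)) * \<gamma>\<^sup>2"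
    by (simp add: power2_eq_square)
  finally show ?thesis .
qed

context haar_measure
begin

lemma sets_pair_eq: "sets (M \<Otimes>\<^sub>M M) = sets borel"
  by (rule sets_pair_measure_borel[OF sets_eq sets_eq])

lemma emeasure_column_forms_less_le:
  fixes Q R :: "real^'n^'n" and \<mu> x :: real
  assumes Q: "psd_matrix Q" and R: "psd_matrix R" and \<mu>: "0 \<le> \<mu>"
  shows "emeasure (M \<Otimes>\<^sub>M M) {p. column_form Q j (fst p) + column_form R j (snd p) < x}
    \<le> ennreal (exp (\<mu> * CARD('n) * x - \<mu> * (trace Q + trace R)
        + \<mu>\<^sup>2 * ((frob_norm Q)\<^sup>2 + (frob_norm R)\<^sup>2)))"
proof -
  interpret pair_prob_space M M ..
  let ?s = "\<mu> * CARD('n)"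
  have measurable: "column_form A j \<in> borel_measurable M" for A :: "real^'n^'n"
    by (intro borel_measurable_continuous_sets_borel[OF sets_eq] continuous_intros continuous_on_id)
  have "emeasure (M \<Otimes>\<^sub>M M) {p. column_form Q j (fst p) + column_form R j (snd p) < x}
      \<le> ennreal (exp (?s * x)) * (\<integral>\<^sup>+U. ennreal (exp (- ?s * column_form Q j U)) \<partial>M)
          * (\<integral>\<^sup>+V. ennreal (exp (- ?s * column_form R j V)) \<partial>M)"
    using emeasure_sum_less_le_exp[OF measurable measurable, where s = ?s and x = x] \<mu>
    by (simp add: sets_eq_imp_space_eq[OF sets_pair_eq])
  also have "\<dots> \<le> ennreal (exp (?s * x)) * ennreal (exp (- \<mu> * trace Q + \<mu>\<^sup>2 * (frob_norm Q)\<^sup>2))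
      * ennreal (exp (- \<mu> * trace R + \<mu>\<^sup>2 * (frob_norm R)\<^sup>2))"
    using nn_integral_exp_column_form_le[OF Q, of ?s j] nn_integral_exp_column_form_le[OF R, of ?s j]
      \<mu>
    by (intro mult_mono) auto
  also have "\<dots> = ennreal (exp (\<mu> * CARD('n) * x - \<mu> * (trace Q + trace R)
        + \<mu>\<^sup>2 * ((frob_norm Q)\<^sup>2 + (frob_norm R)\<^sup>2)))"
    by (simp add: ennreal_mult'[symmetric] mult_exp_exp algebra_simps)
  finally show ?thesis .
qed

lemma prob_column_forms_less_le:
  fixes Q R :: "real^'n^'n" and \<gamma> :: real
  defines "T \<equiv> trace Q + trace R" and "F \<equiv> (frob_norm Q)\<^sup>2 + (frob_norm R)\<^sup>2"
  assumes Q: "psd_matrix Q" and R: "psd_matrix R" and \<gamma>: "0 \<le> \<gamma>" "\<gamma> \<le> 1" and F: "0 < F"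
  shows "measure (M \<Otimes>\<^sub>M M)
      {p. column_form Q j (fst p) + column_form R j (snd p) < T / (2 * real CARD('n)) * (1 - \<gamma>)}
    \<le> exp (- (T\<^sup>2 / (4 * F)) * \<gamma>\<^sup>2)"
proof -
  interpret pair_prob_space M M ..
  let ?thr = "T / (2 * real CARD('n)) * (1 - \<gamma>)"
  define \<mu> where "\<mu> = T * (1 + \<gamma>) / (4 * F)"
  have "0 \<le> \<mu>"
    using F \<gamma> psd_matrix_trace_nonneg[OF Q] psd_matrix_trace_nonneg[OF R] by (simp add: \<mu>_def T_def)
  then have "measure (M \<Otimes>\<^sub>M M) {p. column_form Q j (fst p) + column_form R j (snd p) < ?thr}
      \<le> exp (\<mu> * CARD('n) * ?thr - \<mu> * T + \<mu>\<^sup>2 * F)"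
    using emeasure_column_forms_less_le[OF Q R, of \<mu> j ?thr]
    by (simp add: T_def F_def emeasure_eq_measure)
  also have "\<dots> \<le> exp (- (T\<^sup>2 / (4 * F)) * \<gamma>\<^sup>2)"
    using chernoff_exponent_le[OF F _ \<gamma>, of "CARD('n)" T] by (simp add: \<mu>_def)
  finally show ?thesis .
qed

lemma prob_min_diag_ge:
  fixes Q R :: "real^'n^'n" and \<gamma> :: real
  assumes Q: "psd_matrix Q" and R: "psd_matrix R" and \<gamma>: "0 \<le> \<gamma>" "\<gamma> \<le> 1"
  defines "T \<equiv> trace Q + trace R" and "F \<equiv> (frob_norm Q)\<^sup>2 + (frob_norm R)\<^sup>2"
  shows "1 - CARD('n) * exp (- (T\<^sup>2 / (4 * F)) * \<gamma>\<^sup>2)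
    \<le> measure (M \<Otimes>\<^sub>M M) {(U, V). T / (2 * real CARD('n)) * (1 - \<gamma>) \<le> min_diag Q R U V}"
proof (cases "F = 0")
  case True
  have "1 - real CARD('n) \<le> 0"
    by (simp add: Suc_leI)
  then show ?thesis
    using True by (simp add: order_trans[OF _ measure_nonneg])
next
  case False
  interpret pair_prob_space M M ..
  let ?thr = "T / (2 * real CARD('n)) * (1 - \<gamma>)"
  define E where "E j = {p. column_form Q j (fst p) + column_form R j (snd p) < ?thr}" for j
  have E: "E j \<in> sets (M \<Otimes>\<^sub>M M)" for j
    unfolding E_def sets_pair_eq
    by (intro borel_open open_Collect_less continuous_intros continuous_on_fst continuous_on_snd)
  have "0 < F"
    using False by (simp add: F_def order_le_neq_trans)
  then have tail: "measure (M \<Otimes>\<^sub>M M) (E j) \<le> exp (- (T\<^sup>2 / (4 * F)) * \<gamma>\<^sup>2)" for j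
    unfolding E_def T_def F_def by (rule prob_column_forms_less_le[OF Q R \<gamma>])
  have "(\<Sum>j\<in>UNIV. measure (M \<Otimes>\<^sub>M M) (E j))
      \<le> (\<Sum>j\<in>(UNIV :: 'n set). exp (- (T\<^sup>2 / (4 * F)) * \<gamma>\<^sup>2))"
    by (intro sum_mono tail)
  moreover have "measure (M \<Otimes>\<^sub>M M) (\<Union>j. E j) \<le> (\<Sum>j\<in>UNIV. measure (M \<Otimes>\<^sub>M M) (E j))"
    using E by (intro finite_measure_subadditive_finite) auto
  moreover have "{(U, V). ?thr \<le> min_diag Q R U V} = space (M \<Otimes>\<^sub>M M) - (\<Union>j. E j)"
    by (auto simp: E_def min_diag_column_form sets_eq_imp_space_eq[OF sets_pair_eq] not_less)
       (meson leD)
  ultimately show ?thesis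
    using prob_compl[of "\<Union>j. E j"] E by auto
qed

lemma prob_min_diag_le:
  fixes Q R :: "real^'n^'n" and c :: real
  assumes c: "(trace Q + trace R) / CARD('n) \<le> c"
  shows "measure (M \<Otimes>\<^sub>M M) {(U, V). min_diag Q R U V \<le> c} = 1"
proof -
  interpret pair_prob_space M M ..
  let ?B = "{(U, V). min_diag Q R U V \<le> c}"
  have "?B = (\<Union>j. {p. column_form Q j (fst p) + column_form R j (snd p) \<le> c})"
    by (auto simp: min_diag_column_form Min_le_iff)
  then have B: "?B \<in> sets (M \<Otimes>\<^sub>M M)"
    unfolding sets_pair_eq
    by (auto intro!: borel_closed closed_Collect_le continuous_intros
        continuous_on_fst continuous_on_snd)
  have "AE U in M. AE V in M. (U, V) \<in> ?B"
    using AE_orthogonal_matrix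
  proof eventually_elim
    case (elim U)
    then have U: "orthogonal_matrix U" .
    show ?case
      using AE_orthogonal_matrix
      by eventually_elim (auto intro: order_trans[OF min_diag_le_average[OF U] c])
  qed
  then have "AE p in M \<Otimes>\<^sub>M M. p \<in> ?B"
    using B by (intro AE_pair_measure) (simp_all add: sets_eq_imp_space_eq[OF sets_pair_eq])
  then show ?thesis
    using AE_in_set_eq_1[OF B] by blast
qed

end

theorem mainTheorem1:
  fixes Q R :: "real^'n^'n" and M :: "(real^'n^'n) measure"
  assumes "psd_matrix Q" and "psd_matrix R"
    and "haar_orthogonal M"
  defines "S \<equiv> block_diag Q R"
    and "n \<equiv> real CARD('n)"
    and "P \<equiv> (\<lambda>E. measure (M \<Otimes>\<^sub>M M) {(U, V). E U V})"
  shows "(\<forall>\<gamma>::real. 0 \<le> \<gamma> \<and> \<gamma> \<le> 1 \<longrightarrow>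
           P (\<lambda>U V. min_diag Q R U V \<ge> trace S / (2 * n) * (1 - \<gamma>))
             \<ge> 1 - n * exp (- (trace S ^ 2 / (4 * frob_norm S ^ 2)) * \<gamma>^2) - 2 * exp (- n / 8))
       \<and> (\<forall>\<gamma>::real. 0 \<le> \<gamma> \<longrightarrow>
           P (\<lambda>U V. min_diag Q R U V \<le> 4 * trace S / n * (1 + \<gamma>))
             \<ge> (if \<gamma> \<le> frob_norm S ^ 2 / (trace S * op_norm S)
                 then 1 - exp (- (trace S ^ 2 / (8 * frob_norm S ^ 2)) * \<gamma>^2) - 2 * exp (- n / 8)
                 else 1 - exp (- (trace S / (8 * op_norm S)) * \<gamma>) - 2 * exp (- n / 8)))"
proof -
  interpret haar_measure M
    by (rule haar_measure.intro) fact
  have S: "trace S = trace Q + trace R" "(frob_norm S)\<^sup>2 = (frob_norm Q)\<^sup>2 + (frob_norm R)\<^sup>2"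
    by (simp_all add: S_def trace_block_diag frob_norm_block_diag)
  have lower: "1 - n * exp (- (trace S ^ 2 / (4 * frob_norm S ^ 2)) * \<gamma>^2)
      \<le> P (\<lambda>U V. trace S / (2 * n) * (1 - \<gamma>) \<le> min_diag Q R U V)" if "0 \<le> \<gamma>" "\<gamma> \<le> 1" for \<gamma>
    unfolding P_def n_def S using prob_min_diag_ge[OF assms(1,2) that] .
  have upper: "P (\<lambda>U V. min_diag Q R U V \<le> 4 * trace S / n * (1 + \<gamma>)) = 1" if "0 \<le> \<gamma>" for \<gamma>
  proof -
    have "0 \<le> trace S"
      using psd_matrix_trace_nonneg[OF assms(1)] psd_matrix_trace_nonneg[OF assms(2)]
      by (simp add: S)
    then have "trace S / n \<le> 4 * trace S / n * (1 + \<gamma>)"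
      using that by (simp add: n_def field_simps)
    then show ?thesis
      unfolding P_def n_def using prob_min_diag_le by (simp add: S)
  qed
  show ?thesis
    using lower upper exp_gt_zero by (smt (verit))
qed

end
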